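(* Let $\varepsilon>0$ be such that $1/\varepsilon\ge 3$ is an integer, let $I$ be an input of offline Ordered Open End Bin Packing, and let $\mathrm{OPT}$ be an optimal solution for $I$ with cost $\mathrm{opt}$. Then there is a feasible solution $\mathrm{OPT}'$ of cost at most $(1+\varepsilon^2)\,\mathrm{opt}+1$ such that every exceeding item of a bin of $\mathrm{OPT}'$ has size at least $\varepsilon^2$.
   Context: Ordered Open End Bin Packing (offline): the input is a sequence of items $1,\dots,n$ with sizes in $(0,1]$. A feasible solution partitions the items into bins such that for every bin, the total size of all its items except the one of maximum index is strictly smaller than $1$ (i.e., items are added to a bin in index order, and an item may be added only while the bin's current total size is strictly below $1$). The cost is the number of bins. For a bin $B$ of a feasible solution, if the total size of the items in $B$ is at least $1$, the exceeding item of $B$ is the item of maximum index in $B$; if the total size of $B$ is strictly below $1$, $B$ has no exceeding item. *)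

theory Defs
  imports Complex_Main "HOL-Library.Disjoint_Sets"
begin

definition valid_input :: "nat \<Rightarrow> (nat \<Rightarrow> real) \<Rightarrow> bool" where
  "valid_input n s \<longleftrightarrow> (\<forall>i\<in>{1..n}. 0 < s i \<and> s i \<le> 1)"

definition feasible_bin :: "(nat \<Rightarrow> real) \<Rightarrow> nat set \<Rightarrow> bool" where
  "feasible_bin s B \<longleftrightarrow> (\<Sum>i\<in>B - {Max B}. s i) < 1"

definition feasible_solution :: "nat \<Rightarrow> (nat \<Rightarrow> real) \<Rightarrow> nat set set \<Rightarrow> bool" where
  "feasible_solution n s P \<longleftrightarrow> partition_on {1..n} P \<and> (\<forall>B\<in>P. feasible_bin s B)"

definition cost :: "nat set set \<Rightarrow> nat" where
  "cost P = card P"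

definition optimal_solution :: "nat \<Rightarrow> (nat \<Rightarrow> real) \<Rightarrow> nat set set \<Rightarrow> bool" where
  "optimal_solution n s P \<longleftrightarrow> feasible_solution n s P \<and>
     (\<forall>Q. feasible_solution n s Q \<longrightarrow> cost P \<le> cost Q)"

definition has_exceeding_item :: "(nat \<Rightarrow> real) \<Rightarrow> nat set \<Rightarrow> bool" where
  "has_exceeding_item s B \<longleftrightarrow> (\<Sum>i\<in>B. s i) \<ge> 1"

definition exceeding_item :: "nat set \<Rightarrow> nat" where
  "exceeding_item B = Max B"

end

(*
  Let K = 1/\<epsilon>^2 and call a bin bad if its exceeding item has size below 1/K.
  Removing the exceeding item from every bad bin leaves a bin of total size below 1,
  which is feasible and has no exceeding item. The removed items, each smaller than
  1/K, are packed K at a time into new bins of total size below 1, which adds at most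
  (number of bad bins)/K + 1 bins. The argument works for any feasible solution,
  optimal or not.
*)
theory Submission
  imports Defs
begin

lemma partition_on_Un:
  assumes "partition_on A P" "partition_on B Q" "A \<inter> B = {}"
  shows "partition_on (A \<union> B) (P \<union> Q)"
  using assms by (auto simp: partition_on_def intro: disjoint_union)

lemma partition_on_Max_in:
  assumes "partition_on A P" "finite A" "B \<in> P"
  shows "Max B \<in> B"
proof (rule Max_in)
  show "finite B"
    using assms partition_onD1[OF assms(1)] by (auto intro: finite_subset)
  show "B \<noteq> {}"
    using assms partition_onD3[OF assms(1)] by auto
qed

lemma partition_on_Diff_Max_image:
  assumes P: "partition_on A P" and "finite A" "S \<subseteq> P" "B \<in> P"
  shows "B - Max ` S = (if B \<in> S then B - {Max B} else B)"
proof -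
  have "Max C \<notin> B" if "C \<in> S" "C \<noteq> B" for C
    using partition_on_Max_in[OF P \<open>finite A\<close>, of C] that assms partition_onD2[OF P]
    by (auto simp: disjoint_def)
  then show ?thesis
    using partition_on_Max_in[OF assms(1,2,4)] by auto
qed

lemma partition_on_card_le:
  fixes K :: nat
  assumes "finite M" "K > 0"
  shows "\<exists>Q. partition_on M Q \<and> (\<forall>A\<in>Q. card A \<le> K) \<and>
             real (card Q) \<le> real (card M) / real K + 1"
  using assms
proof (induction "card M" arbitrary: M rule: less_induct)
  case less
  show ?case
  proof (cases "card M \<le> K")
    case True
    show ?thesis
    proof (cases "M = {}")
      case False
      then show ?thesis
        using True less.prems(2) by (intro exI[of _ "{M}"]) (auto simp: partition_on_space)
    qed (auto simp: partition_on_empty)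
  next
    case False
    obtain A where A: "A \<subseteq> M" "card A = K"
      using obtain_subset_with_card_n[of K M] False by auto
    have card_rest: "card (M - A) = card M - K"
      using A less.prems(1) by (simp add: card_Diff_subset finite_subset)
    then obtain Q where Q: "partition_on (M - A) Q" "\<forall>C\<in>Q. card C \<le> K"
        "real (card Q) \<le> real (card (M - A)) / real K + 1"
      using less.hyps[of "M - A"] less.prems False by auto
    have "\<Union>Q = M - A"
      using partition_onD1[OF Q(1)] by simp
    then have "partition_on M (insert A Q)"
      using Q(1) A less.prems(2) by (subst partition_on_insert) (auto simp: disjnt_def)
    moreover have "real (card (insert A Q)) \<le> real (card M) / real K + 1"
    proof -
      have "real (card (insert A Q)) \<le> real (card Q) + 1"
        using finite_elements[OF _ Q(1)] less.prems(1) by (simp add: card_insert_if)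
      also have "\<dots> \<le> (real (card M) - real K) / real K + 2"
        using Q(3) card_rest False by (simp add: of_nat_diff)
      also have "\<dots> = real (card M) / real K + 1"
        using less.prems(2) by (simp add: field_simps)
      finally show ?thesis .
    qed
    ultimately show ?thesis
      using Q(2) A(2) by (intro exI[of _ "insert A Q"]) auto
  qed
qed

lemma partition_on_remove_Max:
  assumes P: "partition_on A P" and "finite A" "S \<subseteq> P" and Q: "partition_on (Max ` S) Q"
  shows "partition_on A ((\<lambda>B. if B \<in> S then B - {Max B} else B) ` P - {{}} \<union> Q)"
proof -
  have "Max ` S \<subseteq> A"
    using partition_on_Max_in[OF P \<open>finite A\<close>] \<open>S \<subseteq> P\<close> partition_onD1[OF P] by blast
  have "(\<lambda>B. if B \<in> S then B - {Max B} else B) ` P = (\<lambda>B. B - Max ` S) ` P"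
    using partition_on_Diff_Max_image[OF assms(1-3)] by (intro image_cong) auto
  moreover have "partition_on (A - Max ` S \<union> Max ` S) ((\<lambda>B. B - Max ` S) ` P - {{}} \<union> Q)"
    using P Q by (intro partition_on_Un partition_on_transform) (auto simp: disjnt_def)
  ultimately show ?thesis
    using \<open>Max ` S \<subseteq> A\<close> by (simp add: Un_absorb2)
qed

definition feasible_bin_large_exceeding :: "real \<Rightarrow> (nat \<Rightarrow> real) \<Rightarrow> nat set \<Rightarrow> bool" where
  "feasible_bin_large_exceeding \<delta> s B \<longleftrightarrow>
     feasible_bin s B \<and> (has_exceeding_item s B \<longrightarrow> \<delta> \<le> s (exceeding_item B))"

lemma feasible_bin_large_exceeding_if_sum_less_1:
  assumes "valid_input n s" "X \<subseteq> {1..n}" "sum s X < 1"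
  shows "feasible_bin_large_exceeding \<delta> s X"
proof -
  have "sum s (X - {Max X}) \<le> sum s X"
    using assms(1,2) by (intro sum_mono2 finite_subset[OF assms(2)]) (auto simp: valid_input_def less_imp_le)
  then show ?thesis
    using assms(3) by (simp add: feasible_bin_large_exceeding_def feasible_bin_def has_exceeding_item_def)
qed

lemma sum_less_1_if_card_le:
  fixes K :: nat
  assumes "finite A" "A \<noteq> {}" "card A \<le> K" "\<forall>i\<in>A. s i < 1 / real K"
  shows "sum s A < 1"
proof -
  have "sum s A < (\<Sum>i\<in>A. 1 / real K)"
    using assms by (intro sum_strict_mono) auto
  also have "\<dots> \<le> 1"
    using assms(3) by (auto simp: divide_le_eq_1)
  finally show ?thesis .
qed

lemma feasible_solution_large_exceeding_items:
  fixes K :: nat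
  assumes s: "valid_input n s" and P: "feasible_solution n s P" and "K > 0"
  shows "\<exists>P'. feasible_solution n s P' \<and>
           real (cost P') \<le> (1 + 1 / real K) * real (cost P) + 1 \<and>
           (\<forall>B\<in>P'. has_exceeding_item s B \<longrightarrow> s (exceeding_item B) \<ge> 1 / real K)"
proof -
  have part: "partition_on {1..n} P" and feas: "\<forall>B\<in>P. feasible_bin s B"
    using P by (auto simp: feasible_solution_def)
  have "finite P"
    using finite_elements[OF _ part] by simp
  define Bad where "Bad = {B\<in>P. has_exceeding_item s B \<and> s (Max B) < 1 / real K}"
  define strip where "strip B = (if B \<in> Bad then B - {Max B} else B)" for B
  have "Bad \<subseteq> P"
    by (auto simp: Bad_def)
  have "finite (Max ` Bad)"
    using \<open>finite P\<close> \<open>Bad \<subseteq> P\<close> finite_subset by blast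
  then obtain Q where Q: "partition_on (Max ` Bad) Q" "\<forall>A\<in>Q. card A \<le> K"
      "real (card Q) \<le> real (card (Max ` Bad)) / real K + 1"
    using partition_on_card_le[of "Max ` Bad" K] \<open>K > 0\<close> by blast
  define P' where "P' = strip ` P - {{}} \<union> Q"
  have "partition_on {1..n} P'"
    unfolding P'_def strip_def using partition_on_remove_Max[OF part _ \<open>Bad \<subseteq> P\<close> Q(1)] by simp
  have "feasible_bin_large_exceeding (1 / real K) s X" if X: "X \<in> P'" for X
  proof -
    have "X \<subseteq> {1..n}"
      using \<open>partition_on {1..n} P'\<close> X by (auto simp: partition_on_def)
    consider (block) "X \<in> Q" | (bad) B where "B \<in> Bad" "X = B - {Max B}"
      | (kept) "X \<in> P" "X \<notin> Bad"
      using X by (auto simp: P'_def strip_def split: if_splits)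
    then show ?thesis
    proof cases
      case block
      have "X \<subseteq> Max ` Bad" "X \<noteq> {}"
        using block partition_onD1[OF Q(1)] partition_onD3[OF Q(1)] by auto
      then have "sum s X < 1"
        using block Q(2) finite_subset[OF \<open>X \<subseteq> {1..n}\<close>]
        by (intro sum_less_1_if_card_le[of _ K]) (auto simp: Bad_def)
      then show ?thesis
        using feasible_bin_large_exceeding_if_sum_less_1[OF s \<open>X \<subseteq> {1..n}\<close>] by blast
    next
      case bad
      then have "sum s X < 1"
        using feas \<open>Bad \<subseteq> P\<close> by (auto simp: feasible_bin_def)
      then show ?thesis
        using feasible_bin_large_exceeding_if_sum_less_1[OF s \<open>X \<subseteq> {1..n}\<close>] by blast
    next
      case kept
      then show ?thesis
        using feas by (auto simp: feasible_bin_large_exceeding_def Bad_def exceeding_item_def)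
    qed
  qed
  moreover have "real (card P') \<le> (1 + 1 / real K) * real (card P) + 1"
  proof -
    have "card P' \<le> card P + card Q"
      unfolding P'_def using card_Un_le card_Diff1_le card_image_le[OF \<open>finite P\<close>]
      by (metis add_right_mono le_trans)
    moreover have "card (Max ` Bad) \<le> card P"
      using card_image_le card_mono[OF \<open>finite P\<close> \<open>Bad \<subseteq> P\<close>] \<open>finite P\<close> \<open>Bad \<subseteq> P\<close>
      by (metis finite_subset le_trans)
    then have "real (card Q) \<le> real (card P) / real K + 1"
      using Q(3) by (smt (verit) divide_right_mono of_nat_0_le_iff of_nat_mono)
    ultimately show ?thesis
      by (simp add: algebra_simps)
  qed
  ultimately show ?thesis
    using \<open>partition_on {1..n} P'\<close>
    by (auto simp: feasible_solution_def feasible_bin_large_exceeding_def cost_def)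
qed

theorem mainTheorem2:
  fixes \<epsilon> :: real and n :: nat and s :: "nat \<Rightarrow> real" and OPT :: "nat set set"
  assumes "\<epsilon> > 0"
    and "\<exists>k::nat. 1 / \<epsilon> = real k \<and> k \<ge> 3"
    and "valid_input n s"
    and "optimal_solution n s OPT"
  shows "\<exists>OPT'. feasible_solution n s OPT' \<and>
           real (cost OPT') \<le> (1 + \<epsilon>^2) * real (cost OPT) + 1 \<and>
           (\<forall>B\<in>OPT'. has_exceeding_item s B \<longrightarrow> s (exceeding_item B) \<ge> \<epsilon>^2)"
proof -
  obtain k :: nat where k: "1 / \<epsilon> = real k" "k \<ge> 3"
    using assms(2) by blast
  then have "\<epsilon>^2 = 1 / real (k^2)"
    by (metis inverse_eq_divide inverse_inverse_eq of_nat_power power_one_over)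
  moreover have "k^2 > 0"
    using k(2) by simp
  moreover have "feasible_solution n s OPT"
    using assms(4) by (simp add: optimal_solution_def)
  ultimately show ?thesis
    using feasible_solution_large_exceeding_items[OF assms(3)] by metis
qed

end
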